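(* Let $Q$ be an equivariantly supported quantal frame with base locale $Q_0$ and support $\varsigma$. Then for all $x\in R(Q)$ and $y\in Q$ we have $\varsigma(x\wedge y)=\varsigma(x)\wedge\varsigma(y)$.
   Context: For a locale $A$, an $A$-$A$-bimodule is a sup-lattice $M$ with actions $a\triangleright m$, $m\triangleleft a$ preserving joins in each variable, with $1_A\triangleright m=m$, $(a\wedge b)\triangleright m=a\triangleright(b\triangleright m)$, $m\triangleleft1_A=m$, $m\triangleleft(a\wedge b)=(m\triangleleft a)\triangleleft b$, $(a\triangleright m)\triangleleft b=a\triangleright(m\triangleleft b)$. An $A$-$A$-quantale is such a $Q$ with associative join-preserving multiplication and $(a\triangleright x)y=a\triangleright(xy)$, $(x\triangleleft a)y=x(a\triangleright y)$, $(xy)\triangleleft a=x(y\triangleleft a)$; involutive if there is a join-preserving $x\mapsto x^*$ with $x^{**}=x$, $(xy)^*=y^*x^*$, $(a\triangleright(x\triangleleft b))^*=b\triangleright(x^*\triangleleft a)$. $1_Q$ is the top. A support is a join-preserving $\varsigma:Q\to Q_0$ with $\varsigma(1_Q)=1_{Q_0}$, $\varsigma(x)\triangleright y\le xx^*y$, $\varsigma(x)\triangleright x=x$; equivariant if $\varsigma(a\triangleright x)=a\wedge\varsigma(x)$. An equivariantly supported quantal frame is an involutive $Q_0$-$Q_0$-quantale with an equivariant support whose lattice is a frame and such that $(a\triangleright x)\wedge y=a\triangleright(x\wedge y)$ and $(x\triangleleft a)\wedge y=(x\wedge y)\triangleleft a$ for all $a\in Q_0$, $x,y\in Q$. $R(Q)=\{x\in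 Q\mid x1_Q\le x\}$. *)

theory Defs
  imports Main
begin

unbundle lattice_syntax

definition sup_pres :: "('a::complete_lattice \<Rightarrow> 'b::complete_lattice) \<Rightarrow> bool" where
  "sup_pres f \<longleftrightarrow> (\<forall>S. f (Sup S) = Sup (f ` S))"

definition is_frame :: "'a::complete_lattice itself \<Rightarrow> bool" where
  "is_frame _ \<longleftrightarrow> (\<forall>(x::'a) S. x \<sqinter> Sup S = Sup ((inf x) ` S))"

definition bimodule ::
  "('a::complete_lattice \<Rightarrow> 'b::complete_lattice \<Rightarrow> 'b) \<Rightarrow> ('b \<Rightarrow> 'a \<Rightarrow> 'b) \<Rightarrow> bool" where
  "bimodule lact ract \<longleftrightarrow>
     (\<forall>a. sup_pres (lact a)) \<and> (\<forall>m. sup_pres (\<lambda>a. lact a m)) \<and>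
     (\<forall>a. sup_pres (\<lambda>m. ract m a)) \<and> (\<forall>m. sup_pres (ract m)) \<and>
     (\<forall>m. lact top m = m) \<and> (\<forall>a b m. lact (a \<sqinter> b) m = lact a (lact b m)) \<and>
     (\<forall>m. ract m top = m) \<and> (\<forall>a b m. ract m (a \<sqinter> b) = ract (ract m a) b) \<and>
     (\<forall>a b m. ract (lact a m) b = lact a (ract m b))"

definition quantale ::
  "('a::complete_lattice \<Rightarrow> 'b::complete_lattice \<Rightarrow> 'b) \<Rightarrow> ('b \<Rightarrow> 'a \<Rightarrow> 'b) \<Rightarrow> ('b \<Rightarrow> 'b \<Rightarrow> 'b) \<Rightarrow> bool" where
  "quantale lact ract mult \<longleftrightarrow> bimodule lact ract \<and>
     (\<forall>x y z. mult (mult x y) z = mult x (mult y z)) \<and>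
     (\<forall>x. sup_pres (mult x)) \<and> (\<forall>y. sup_pres (\<lambda>x. mult x y)) \<and>
     (\<forall>a x y. mult (lact a x) y = lact a (mult x y)) \<and>
     (\<forall>a x y. mult (ract x a) y = mult x (lact a y)) \<and>
     (\<forall>a x y. ract (mult x y) a = mult x (ract y a))"

definition involutive_quantale ::
  "('a::complete_lattice \<Rightarrow> 'b::complete_lattice \<Rightarrow> 'b) \<Rightarrow> ('b \<Rightarrow> 'a \<Rightarrow> 'b) \<Rightarrow> ('b \<Rightarrow> 'b \<Rightarrow> 'b)
    \<Rightarrow> ('b \<Rightarrow> 'b) \<Rightarrow> bool" where
  "involutive_quantale lact ract mult invo \<longleftrightarrow> quantale lact ract mult \<and>
     sup_pres invo \<and> (\<forall>x. invo (invo x) = x) \<and>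
     (\<forall>x y. invo (mult x y) = mult (invo y) (invo x)) \<and>
     (\<forall>a b x. invo (lact a (ract x b)) = lact b (ract (invo x) a))"

text \<open>Support; x x* y is read as (x x*) y (multiplication is associative).\<close>
definition support ::
  "('a::complete_lattice \<Rightarrow> 'b::complete_lattice \<Rightarrow> 'b) \<Rightarrow> ('b \<Rightarrow> 'b \<Rightarrow> 'b)
    \<Rightarrow> ('b \<Rightarrow> 'b) \<Rightarrow> ('b \<Rightarrow> 'a) \<Rightarrow> bool" where
  "support lact mult invo supp \<longleftrightarrow> sup_pres supp \<and> supp top = top \<and>
     (\<forall>x y. lact (supp x) y \<le> mult (mult x (invo x)) y) \<and>
     (\<forall>x. lact (supp x) x = x)"

definition equivariant_support ::
  "('a::complete_lattice \<Rightarrow> 'b::complete_lattice \<Rightarrow> 'b) \<Rightarrow> ('b \<Rightarrow> 'b \<Rightarrow> 'b)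
    \<Rightarrow> ('b \<Rightarrow> 'b) \<Rightarrow> ('b \<Rightarrow> 'a) \<Rightarrow> bool" where
  "equivariant_support lact mult invo supp \<longleftrightarrow> support lact mult invo supp \<and>
     (\<forall>a x. supp (lact a x) = a \<sqinter> supp x)"

text \<open>Equivariantly supported quantal frame Q (type 'b) over base locale Q0 (type 'a).\<close>
definition eq_supp_quantal_frame ::
  "('a::complete_lattice \<Rightarrow> 'b::complete_lattice \<Rightarrow> 'b) \<Rightarrow> ('b \<Rightarrow> 'a \<Rightarrow> 'b) \<Rightarrow> ('b \<Rightarrow> 'b \<Rightarrow> 'b)
    \<Rightarrow> ('b \<Rightarrow> 'b) \<Rightarrow> ('b \<Rightarrow> 'a) \<Rightarrow> bool" where
  "eq_supp_quantal_frame lact ract mult invo supp \<longleftrightarrow>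
     is_frame TYPE('a) \<and> is_frame TYPE('b) \<and>
     involutive_quantale lact ract mult invo \<and>
     equivariant_support lact mult invo supp \<and>
     (\<forall>a x y. lact a x \<sqinter> y = lact a (x \<sqinter> y)) \<and>
     (\<forall>a x y. ract x a \<sqinter> y = ract (x \<sqinter> y) a)"

definition RQ :: "('b::complete_lattice \<Rightarrow> 'b \<Rightarrow> 'b) \<Rightarrow> 'b set" where
  "RQ mult = {x. mult x top \<le> x}"

end

theory Submission
  imports Defs
begin

text \<open>For right-sided \<open>x\<close>, the element \<open>\<varsigma>(x) \<triangleright> y\<close> lies below both \<open>x\<close> (as
  \<open>\<varsigma>(x) \<triangleright> y \<le> x x\<^sup>* y \<le> x 1 \<le> x\<close>) and \<open>y\<close>, and by equivariance its support is
  \<open>\<varsigma>(x) \<sqinter> \<varsigma>(y)\<close>; monotonicity of \<open>\<varsigma>\<close> then gives the nontrivial inequality.\<close>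

lemma sup_pres_mono:
  assumes "sup_pres f"
  shows "mono f"
proof (rule monoI)
  fix a b :: 'a
  assume "a \<le> b"
  then have "b = Sup {a, b}" by (simp add: sup_absorb2)
  then have "f b = Sup (f ` {a, b})" using assms unfolding sup_pres_def by metis
  then show "f a \<le> f b" by (simp add: sup.absorb_iff2)
qed

lemma bimodule_lact_le:
  assumes "bimodule lact ract"
  shows "lact a m \<le> m"
proof -
  have "mono (\<lambda>a. lact a m)"
    using assms unfolding bimodule_def by (blast intro: sup_pres_mono)
  then have "lact a m \<le> lact top m" by (rule monoD) simp
  also have "\<dots> = m" using assms unfolding bimodule_def by blast
  finally show ?thesis .
qed

lemma support_lact_le_RQ:
  assumes "quantale lact ract mult" and "support lact mult invo supp" and "x \<in> RQ mult"
  shows "lact (supp x) y \<le> x"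
proof -
  have "lact (supp x) y \<le> mult (mult x (invo x)) y"
    using assms(2) unfolding support_def by blast
  also have "\<dots> = mult x (mult (invo x) y)"
    using assms(1) unfolding quantale_def by blast
  also have "\<dots> \<le> mult x top"
    using assms(1) unfolding quantale_def by (blast intro: monoD sup_pres_mono top_greatest)
  also have "\<dots> \<le> x" using assms(3) unfolding RQ_def by blast
  finally show ?thesis .
qed

lemma equivariant_support_inf_RQ:
  assumes "quantale lact ract mult" and "equivariant_support lact mult invo supp"
    and "x \<in> RQ mult"
  shows "supp (x \<sqinter> y) = supp x \<sqinter> supp y"
proof (rule antisym)
  have supp: "support lact mult invo supp"
    using assms(2) unfolding equivariant_support_def by blast
  then have supp_mono: "mono supp"
    unfolding support_def by (blast intro: sup_pres_mono)
  then show "supp (x \<sqinter> y) \<le> supp x \<sqinter> supp y"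
    by (simp add: monoD)
  have bimod: "bimodule lact ract"
    using assms(1) unfolding quantale_def by blast
  have "lact (supp x) y \<le> x \<sqinter> y"
    using support_lact_le_RQ[OF assms(1) supp assms(3)] bimodule_lact_le[OF bimod] by simp
  then have "supp (lact (supp x) y) \<le> supp (x \<sqinter> y)"
    using supp_mono by (simp add: monoD)
  moreover have "supp (lact (supp x) y) = supp x \<sqinter> supp y"
    using assms(2) unfolding equivariant_support_def by blast
  ultimately show "supp x \<sqinter> supp y \<le> supp (x \<sqinter> y)" by simp
qed

theorem lemma4p3:
  fixes lact :: "'a::complete_lattice \<Rightarrow> 'b::complete_lattice \<Rightarrow> 'b"
    and ract :: "'b \<Rightarrow> 'a \<Rightarrow> 'b" and mult :: "'b \<Rightarrow> 'b \<Rightarrow> 'b"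
    and invo :: "'b \<Rightarrow> 'b" and supp :: "'b \<Rightarrow> 'a"
  assumes "eq_supp_quantal_frame lact ract mult invo supp"
    and "x \<in> RQ mult"
  shows "supp (inf x y) = inf (supp x) (supp y)"
proof -
  have "quantale lact ract mult" and "equivariant_support lact mult invo supp"
    using assms(1) unfolding eq_supp_quantal_frame_def involutive_quantale_def by blast+
  then show ?thesis using equivariant_support_inf_RQ assms(2) by blast
qed

end
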